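(* Let $B_{\mathrm{lbl}}(x,y)=\sum_{i,j\ge0}2^{ij}\frac{x^iy^j}{i!\,j!}$, the exponential generating function for labelled bicoloured graphs, and let $T_{\mathrm{lbl}}(x,y)=\sum_{i,j\ge0}\tau_{i,j}\frac{x^iy^j}{i!\,j!}$, where $\tau_{i,j}$ is the number of edge sets $E\subseteq V_1\times V_2$ with $V_1=\{u_1,\dots,u_i\}$, $V_2=\{w_1,\dots,w_j\}$ fixed labelled sets such that $(V_1,V_2,E)$ is a tangle. Then \[T_{\mathrm{lbl}}(x,y)=e^{-x}+e^{-y}-1-B_{\mathrm{lbl}}(x,y)^{-1}.\]
   Context: A bicoloured graph is a triple $G=(V_1,V_2,E)$ with $V_1,V_2$ disjoint finite sets (ordered colour classes) and $E\subseteq V_1\times V_2$. For a vertex $u$ let $N(u)$ be its set of neighbours. $G$ is called a tangle if $|V_1|\ge2$, $|V_2|\ge2$, the graph on $V_2$ joining $a,b$ whenever neither of $N(a),N(b)$ contains the other is connected, and the graph on $V_1$ defined by the same rule is connected. (Equivalently, viewing $G$ as the poset on $V_1\cup V_2$ with $u<w$ iff $u\in V_1,w\in V_2$, $(u,w)\in E$, the whole poset is a single tangle with top $V_2$ and bottom $V_1$.) *)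

theory Defs
  imports "HOL-Computational_Algebra.Formal_Power_Series"
begin

text \<open>A bicoloured graph is given by colour classes V1 (bottom), V2 (top) and E \<subseteq> V1 \<times> V2.\<close>

definition nbr1 :: "'b set \<Rightarrow> ('a \<times> 'b) set \<Rightarrow> 'a \<Rightarrow> 'b set" where
  "nbr1 V2 E u = {w \<in> V2. (u, w) \<in> E}"

definition nbr2 :: "'a set \<Rightarrow> ('a \<times> 'b) set \<Rightarrow> 'b \<Rightarrow> 'a set" where
  "nbr2 V1 E w = {u \<in> V1. (u, w) \<in> E}"

definition connected_on :: "'c set \<Rightarrow> ('c \<Rightarrow> 'c \<Rightarrow> bool) \<Rightarrow> bool" where
  "connected_on S R \<longleftrightarrow>
     (\<forall>a\<in>S. \<forall>b\<in>S. (a, b) \<in> {(x, y). x \<in> S \<and> y \<in> S \<and> R x y}\<^sup>*)"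

definition incomparable :: "'c set \<Rightarrow> 'c set \<Rightarrow> bool" where
  "incomparable A B \<longleftrightarrow> \<not> A \<subseteq> B \<and> \<not> B \<subseteq> A"

definition tangle :: "'a set \<Rightarrow> 'b set \<Rightarrow> ('a \<times> 'b) set \<Rightarrow> bool" where
  "tangle V1 V2 E \<longleftrightarrow>
     E \<subseteq> V1 \<times> V2 \<and> card V1 \<ge> 2 \<and> card V2 \<ge> 2 \<and>
     connected_on V2 (\<lambda>a b. incomparable (nbr2 V1 E a) (nbr2 V1 E b)) \<and>
     connected_on V1 (\<lambda>a b. incomparable (nbr1 V2 E a) (nbr1 V2 E b))"

definition tau :: "nat \<Rightarrow> nat \<Rightarrow> nat" where
  "tau i j = card {E. E \<subseteq> {0..<i} \<times> {0..<j} \<and> tangle {0..<i} {0..<j} E}"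

text \<open>Bivariate formal power series in x, y are represented as (real fps) fps:
  the outer variable is x, the inner variable is y; coefficient of x^i y^j is (F $ i) $ j.\<close>

definition B_lbl :: "real fps fps" where
  "B_lbl = Abs_fps (\<lambda>i. Abs_fps (\<lambda>j. 2 ^ (i * j) / (fact i * fact j)))"

definition T_lbl :: "real fps fps" where
  "T_lbl = Abs_fps (\<lambda>i. Abs_fps (\<lambda>j. real (tau i j) / (fact i * fact j)))"

definition exp_neg_x :: "real fps fps" where
  "exp_neg_x = Abs_fps (\<lambda>i. fps_const ((-1) ^ i / fact i))"

definition exp_neg_y :: "real fps fps" where
  "exp_neg_y = fps_const (fps_exp (-1))"

end

theory Submission
  imports Defs
begin

text \<open>
  Call (A, C) a cut of (V1, V2, E) if A \<subseteq> V1, C \<subseteq> V2, every vertex of V1 - A is joined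
  to all of C and no vertex of A has a neighbour outside C. Tangles are exactly the graphs
  whose only cuts are the two trivial ones. Consequently the inclusion-minimal nontrivial cut
  of a graph spans a tangle, it is the only cut that does, and it exists precisely when no
  bottom vertex is isolated and no top vertex is adjacent to all bottom vertices. Counting
  pairs of a labelled graph and its top tangle gives, for (n, m) \<noteq> (0, 0),

    sum over a, b of  C(n, a) C(m, b) tau(a, b) 2^((n - a)(m - b))  =  (2^m - 1)^n + (2^n - 1)^m - 2^(n m),

  the coefficient form of T_lbl B_lbl = (e^-x + e^-y - 1) B_lbl - 1, because e^-x B_lbl and
  e^-y B_lbl count the graphs without isolated bottom vertices and without full top vertices.
\<close>

unbundle fps_syntax

section \<open>Cuts and tangles\<close>

definition is_cut :: "'a set \<Rightarrow> 'b set \<Rightarrow> ('a \<times> 'b) set \<Rightarrow> 'a set \<Rightarrow> 'b set \<Rightarrow> bool" where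
  "is_cut V1 V2 E A C \<longleftrightarrow>
     A \<subseteq> V1 \<and> C \<subseteq> V2 \<and> (V1 - A) \<times> C \<subseteq> E \<and> E \<inter> A \<times> (V2 - C) = {}"

definition prime_bigraph :: "'a set \<Rightarrow> 'b set \<Rightarrow> ('a \<times> 'b) set \<Rightarrow> bool" where
  "prime_bigraph V1 V2 E \<longleftrightarrow>
     (\<forall>A C. is_cut V1 V2 E A C \<longrightarrow> A = {} \<and> C = {} \<or> A = V1 \<and> C = V2)"

lemma connected_on_crossing:
  assumes "connected_on S R" "a \<in> S" "b \<in> S" "a \<in> X" "b \<notin> X"
  obtains x y where "x \<in> S \<inter> X" "y \<in> S - X" "R x y"
proof -
  have "(a, b) \<in> {(x, y). x \<in> S \<and> y \<in> S \<and> R x y}\<^sup>*"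
    using assms(1-3) unfolding connected_on_def by blast
  then show thesis
    using assms(4,5) that by (induction rule: rtrancl_induct) auto
qed

lemma connected_on_has_edge:
  assumes "connected_on S R" "2 \<le> card S" "a \<in> S"
  obtains b where "b \<in> S" "R a b"
proof -
  have "finite S"
    using assms(2) by (intro card_ge_0_finite) simp
  with assms(2) obtain x y where "x \<in> S" "y \<in> S" "x \<noteq> y"
    using card_le_Suc0_iff_eq[of S] by (metis not_less_eq_eq numeral_2_eq_2)
  then obtain b where "b \<in> S" "b \<noteq> a"
    by blast
  from connected_on_crossing[OF assms(1,3) this(1), of "{a}"] this(2) that show thesis by blast
qed

lemma nbr2_converse: "nbr2 V2 (E\<inverse>) = nbr1 V2 E"
  by (auto simp: nbr1_def nbr2_def)

lemma is_cut_converse: "is_cut V1 V2 E A C \<Longrightarrow> is_cut V2 V1 (E\<inverse>) (V2 - C) (V1 - A)"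
  unfolding is_cut_def by blast

lemma prime_bigraph_converse:
  assumes "prime_bigraph V1 V2 E"
  shows "prime_bigraph V2 V1 (E\<inverse>)"
  unfolding prime_bigraph_def
proof (intro allI impI)
  fix A C assume cut: "is_cut V2 V1 (E\<inverse>) A C"
  have "V1 - C = {} \<and> V2 - A = {} \<or> V1 - C = V1 \<and> V2 - A = V2"
    using assms is_cut_converse[OF cut] unfolding prime_bigraph_def converse_converse by blast
  moreover have "A \<subseteq> V2" "C \<subseteq> V1"
    using cut by (simp_all add: is_cut_def)
  ultimately show "A = {} \<and> C = {} \<or> A = V2 \<and> C = V1"
    by auto
qed

lemma is_cut_top_trivial:
  assumes cut: "is_cut V1 V2 E A C"
    and conn: "connected_on V2 (\<lambda>a b. incomparable (nbr2 V1 E a) (nbr2 V1 E b))"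
  shows "C = {} \<or> C = V2"
proof (rule ccontr)
  assume "\<not> (C = {} \<or> C = V2)"
  then obtain w w' where "w \<in> V2" "w' \<in> V2" "w \<in> C" "w' \<notin> C"
    using cut unfolding is_cut_def by blast
  then obtain x y where "x \<in> V2 \<inter> C" "y \<in> V2 - C"
      and incomp: "incomparable (nbr2 V1 E x) (nbr2 V1 E y)"
    by (rule connected_on_crossing[OF conn])
  then have "nbr2 V1 E y \<subseteq> nbr2 V1 E x"
    using cut unfolding is_cut_def nbr2_def by blast
  with incomp show False
    unfolding incomparable_def by blast
qed

lemma tangle_imp_prime_bigraph:
  assumes "tangle V1 V2 E"
  shows "prime_bigraph V1 V2 E"
  unfolding prime_bigraph_def
proof (intro allI impI)
  fix A C assume cut: "is_cut V1 V2 E A C"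
  have conn: "connected_on V2 (\<lambda>a b. incomparable (nbr2 V1 E a) (nbr2 V1 E b))"
    and two: "2 \<le> card V2"
    using assms by (simp_all add: tangle_def)
  have C: "C = {} \<or> C = V2"
    using is_cut_top_trivial[OF cut conn] .
  have "V1 - A = {} \<or> V1 - A = V1"
    using is_cut_top_trivial[OF is_cut_converse[OF cut]] assms
    by (simp add: tangle_def nbr2_converse)
  then have A: "A = V1 \<or> A = {}"
    using cut unfolding is_cut_def by blast
  have False if "A = {} \<and> C = V2 \<or> A = V1 \<and> C = {}"
  proof -
    have same_nbrs: "nbr2 V1 E w = (if A = {} then V1 else {})" if "w \<in> V2" for w
      using cut \<open>A = {} \<and> C = V2 \<or> A = V1 \<and> C = {}\<close> that
      unfolding is_cut_def nbr2_def by auto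
    obtain w where "w \<in> V2"
      using two by (metis card.empty ex_in_conv not_numeral_le_zero)
    then obtain w' where "w' \<in> V2" "incomparable (nbr2 V1 E w) (nbr2 V1 E w')"
      using connected_on_has_edge[OF conn two] by blast
    with \<open>w \<in> V2\<close> show False
      unfolding incomparable_def by (simp add: same_nbrs)
  qed
  with A C show "A = {} \<and> C = {} \<or> A = V1 \<and> C = V2"
    by blast
qed

lemma incomparable_component_below:
  fixes f :: "'c \<Rightarrow> 'd set"
  assumes path: "(x0, d) \<in> {(x, y). x \<in> S \<and> y \<in> S \<and> incomparable (f x) (f y)}\<^sup>*"
    and outside: "w \<in> S" "(x0, w) \<notin> {(x, y). x \<in> S \<and> y \<in> S \<and> incomparable (f x) (f y)}\<^sup>*"
    and start: "f x0 \<subseteq> f w"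
  shows "f d \<subseteq> f w"
  using path
proof (induction rule: rtrancl_induct)
  case base
  show ?case using start .
next
  case (step y z)
  have "\<not> incomparable (f z) (f w)"
    using outside step.hyps by (blast intro: rtrancl_into_rtrancl)
  with step.IH step.hyps(2) show ?case
    unfolding incomparable_def by blast
qed

lemma prime_bigraph_connected_top:
  assumes "finite V1" and prime: "prime_bigraph V1 V2 E"
  shows "connected_on V2 (\<lambda>a b. incomparable (nbr2 V1 E a) (nbr2 V1 E b))"
proof (cases "V2 = {}")
  case True
  then show ?thesis by (simp add: connected_on_def)
next
  case False
  let ?N = "nbr2 V1 E"
  let ?R = "{(x, y). x \<in> V2 \<and> y \<in> V2 \<and> incomparable (?N x) (?N y)}"
  obtain w0 where w0: "w0 \<in> V2" and min: "\<And>w. w \<in> V2 \<Longrightarrow> card (?N w0) \<le> card (?N w)"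
    using ex_has_least_nat[of "\<lambda>w. w \<in> V2" _ "\<lambda>w. card (?N w)"] False by blast
  define D where "D = {w. (w0, w) \<in> ?R\<^sup>*}"
  \<comment> \<open>By minimality of w0, all of D lies below every top vertex outside D; this yields a cut.\<close>
  have below: "?N d \<subseteq> ?N w" if "d \<in> D" "w \<in> V2" "w \<notin> D" for d w
  proof -
    have path: "(w0, d) \<in> ?R\<^sup>*" and outside: "(w0, w) \<notin> ?R\<^sup>*"
      using that unfolding D_def by auto
    then have "\<not> incomparable (?N w0) (?N w)"
      using w0 \<open>w \<in> V2\<close> by blast
    moreover have "finite (?N w0)"
      using \<open>finite V1\<close> unfolding nbr2_def by simp
    then have "?N w \<subseteq> ?N w0 \<Longrightarrow> ?N w = ?N w0"
      using card_seteq[OF _ _ min[OF \<open>w \<in> V2\<close>]] by blast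
    ultimately have "?N w0 \<subseteq> ?N w"
      unfolding incomparable_def by blast
    with path \<open>w \<in> V2\<close> outside show ?thesis
      by (rule incomparable_component_below)
  qed
  have "is_cut V1 V2 E {u \<in> V1. \<forall>d\<in>D. (u, d) \<notin> E} (V2 - D)"
    using below unfolding is_cut_def nbr2_def by blast
  moreover have "w0 \<in> D"
    unfolding D_def by simp
  ultimately have "V2 \<subseteq> D"
    using prime w0 unfolding prime_bigraph_def by blast
  have "sym (?R\<^sup>*)"
    by (intro sym_rtrancl) (auto simp: sym_def incomparable_def)
  show ?thesis
    unfolding connected_on_def
  proof (intro ballI)
    fix a b assume "a \<in> V2" "b \<in> V2"
    with \<open>V2 \<subseteq> D\<close> have "(w0, a) \<in> ?R\<^sup>*" "(w0, b) \<in> ?R\<^sup>*"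
      unfolding D_def by auto
    with \<open>sym (?R\<^sup>*)\<close> show "(a, b) \<in> ?R\<^sup>*"
      by (meson rtrancl_trans symD)
  qed
qed

lemma prime_bigraph_no_isolated:
  assumes "prime_bigraph V1 V2 E" "V2 \<noteq> {}" "u \<in> V1"
  shows "\<exists>w\<in>V2. (u, w) \<in> E"
proof (rule ccontr)
  assume "\<not> ?thesis"
  then have "is_cut V1 V2 E {u} {}"
    using \<open>u \<in> V1\<close> by (auto simp: is_cut_def)
  with assms(1,2) show False
    by (auto simp: prime_bigraph_def)
qed

lemma prime_bigraph_no_full:
  assumes "prime_bigraph V1 V2 E" "V1 \<noteq> {}" "w \<in> V2"
  shows "\<exists>u\<in>V1. (u, w) \<notin> E"
proof (rule ccontr)
  assume "\<not> ?thesis"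
  then have "is_cut V1 V2 E {} {w}"
    using \<open>w \<in> V2\<close> by (auto simp: is_cut_def)
  with assms(1,2) show False
    by (auto simp: prime_bigraph_def)
qed

lemma prime_bigraph_imp_tangle:
  assumes "E \<subseteq> V1 \<times> V2" "finite V1" "finite V2" "V1 \<noteq> {}" "V2 \<noteq> {}"
    and prime: "prime_bigraph V1 V2 E"
  shows "tangle V1 V2 E"
proof -
  have "2 \<le> card V1"
  proof (rule ccontr)
    assume "\<not> 2 \<le> card V1"
    with \<open>finite V1\<close> \<open>V1 \<noteq> {}\<close> have "card V1 = 1"
      using card_0_eq[of V1] by linarith
    then obtain u where "V1 = {u}"
      by (rule card_1_singletonE)
    moreover obtain w where "w \<in> V2" "(u, w) \<in> E"
      using prime_bigraph_no_isolated[OF prime \<open>V2 \<noteq> {}\<close>] \<open>V1 = {u}\<close> by blast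
    ultimately show False
      using prime_bigraph_no_full[OF prime \<open>V1 \<noteq> {}\<close>] by blast
  qed
  moreover have "2 \<le> card V2"
  proof (rule ccontr)
    assume "\<not> 2 \<le> card V2"
    with \<open>finite V2\<close> \<open>V2 \<noteq> {}\<close> have "card V2 = 1"
      using card_0_eq[of V2] by linarith
    then obtain w where "V2 = {w}"
      by (rule card_1_singletonE)
    moreover obtain u where "u \<in> V1" "(u, w) \<notin> E"
      using prime_bigraph_no_full[OF prime \<open>V1 \<noteq> {}\<close>] \<open>V2 = {w}\<close> by blast
    ultimately show False
      using prime_bigraph_no_isolated[OF prime \<open>V2 \<noteq> {}\<close>] by blast
  qed
  moreover note prime_bigraph_connected_top[OF \<open>finite V1\<close> prime]
  moreover note prime_bigraph_connected_top[OF \<open>finite V2\<close> prime_bigraph_converse[OF prime]]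
  ultimately show ?thesis
    using assms(1) by (simp add: tangle_def nbr2_converse)
qed


section \<open>The top tangle of a graph\<close>

definition top_tangles :: "'a set \<Rightarrow> 'b set \<Rightarrow> ('a \<times> 'b) set \<Rightarrow> ('a set \<times> 'b set) set" where
  "top_tangles V1 V2 E = {(A, C). is_cut V1 V2 E A C \<and> tangle A C (E \<inter> A \<times> C)}"

lemma is_cut_restrict:
  "is_cut V1 V2 E A C \<Longrightarrow> is_cut A C (E \<inter> A \<times> C) A' C' \<Longrightarrow> is_cut V1 V2 E A' C'"
  unfolding is_cut_def by blast

lemma is_cut_Int:
  "is_cut V1 V2 E A C \<Longrightarrow> is_cut V1 V2 E A' C' \<Longrightarrow> is_cut A C (E \<inter> A \<times> C) (A \<inter> A') (C \<inter> C')"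
  unfolding is_cut_def by blast

lemma top_tangles_no_isolated:
  assumes "(A, C) \<in> top_tangles V1 V2 E" "u \<in> V1"
  shows "\<exists>w\<in>V2. (u, w) \<in> E"
proof (rule ccontr)
  assume isolated: "\<not> ?thesis"
  let ?N = "nbr1 C (E \<inter> A \<times> C)"
  have cut: "is_cut V1 V2 E A C" and two: "2 \<le> card A" "2 \<le> card C"
    and conn: "connected_on A (\<lambda>a b. incomparable (?N a) (?N b))"
    using assms(1) by (auto simp: top_tangles_def tangle_def)
  obtain w where "w \<in> C"
    using two(2) by (metis card.empty ex_in_conv not_numeral_le_zero)
  with cut isolated \<open>u \<in> V1\<close> have "u \<in> A"
    unfolding is_cut_def by blast
  then obtain v where "incomparable (?N u) (?N v)"
    using connected_on_has_edge[OF conn two(1)] by blast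
  moreover have "?N u = {}"
    using isolated cut unfolding is_cut_def nbr1_def by blast
  ultimately show False
    unfolding incomparable_def by blast
qed

lemma top_tangles_no_full:
  assumes "(A, C) \<in> top_tangles V1 V2 E" "w \<in> V2"
  shows "\<exists>u\<in>V1. (u, w) \<notin> E"
proof (rule ccontr)
  assume full: "\<not> ?thesis"
  let ?N = "nbr2 A (E \<inter> A \<times> C)"
  have cut: "is_cut V1 V2 E A C" and two: "2 \<le> card A" "2 \<le> card C"
    and conn: "connected_on C (\<lambda>a b. incomparable (?N a) (?N b))"
    using assms(1) by (auto simp: top_tangles_def tangle_def)
  obtain u where "u \<in> A"
    using two(1) by (metis card.empty ex_in_conv not_numeral_le_zero)
  with cut full \<open>w \<in> V2\<close> have "w \<in> C"
    unfolding is_cut_def by blast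
  then obtain v where "incomparable (?N w) (?N v)"
    using connected_on_has_edge[OF conn two(2)] by blast
  moreover have "?N w = A" "?N v \<subseteq> A"
    using full cut \<open>w \<in> C\<close> unfolding is_cut_def nbr2_def by blast+
  ultimately show False
    unfolding incomparable_def by blast
qed

lemma top_tangles_unique:
  assumes "(A, C) \<in> top_tangles V1 V2 E" "(A', C') \<in> top_tangles V1 V2 E"
  shows "A = A' \<and> C = C'"
proof -
  have cut: "is_cut V1 V2 E A C" and cut': "is_cut V1 V2 E A' C'"
    and tangle: "tangle A C (E \<inter> A \<times> C)" and tangle': "tangle A' C' (E \<inter> A' \<times> C')"
    using assms by (simp_all add: top_tangles_def)
  have prime: "prime_bigraph A C (E \<inter> A \<times> C)" and prime': "prime_bigraph A' C' (E \<inter> A' \<times> C')"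
    using tangle tangle' by (simp_all add: tangle_imp_prime_bigraph)
  have "A' \<noteq> {}" "C \<noteq> {}"
    using tangle tangle' by (auto simp: tangle_def)
  have "A \<inter> A' = {} \<and> C \<inter> C' = {} \<or> A \<inter> A' = A \<and> C \<inter> C' = C"
    using prime is_cut_Int[OF cut cut'] unfolding prime_bigraph_def by blast
  moreover have "A' \<inter> A = {} \<and> C' \<inter> C = {} \<or> A' \<inter> A = A' \<and> C' \<inter> C = C'"
    using prime' is_cut_Int[OF cut' cut] unfolding prime_bigraph_def by blast
  moreover have "\<not> (A \<inter> A' = {} \<and> C \<inter> C' = {})"
  proof
    assume "A \<inter> A' = {} \<and> C \<inter> C' = {}"
    then have "A' \<subseteq> V1 - A" "C \<subseteq> V2 - C'"
      using cut cut' unfolding is_cut_def by auto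
    then have "A' \<times> C \<subseteq> E" "E \<inter> A' \<times> C = {}"
      using cut cut' unfolding is_cut_def by auto
    with \<open>A' \<noteq> {}\<close> \<open>C \<noteq> {}\<close> show False
      by auto
  qed
  ultimately show ?thesis
    by (metis Int_commute)
qed

lemma minimal_cut_prime_bigraph:
  assumes cut: "is_cut V1 V2 E A C" and "finite A" "finite C"
    and min: "\<And>A' C'. is_cut V1 V2 E A' C' \<Longrightarrow> A' \<noteq> {} \<or> C' \<noteq> {} \<Longrightarrow>
      card A + card C \<le> card A' + card C'"
  shows "prime_bigraph A C (E \<inter> A \<times> C)"
  unfolding prime_bigraph_def
proof (intro allI impI)
  fix A' C' assume cut': "is_cut A C (E \<inter> A \<times> C) A' C'"
  then have "A' \<subseteq> A" "C' \<subseteq> C"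
    by (simp_all add: is_cut_def)
  then show "A' = {} \<and> C' = {} \<or> A' = A \<and> C' = C"
  proof (cases "A' = {} \<and> C' = {}")
    case False
    then have "card A + card C \<le> card A' + card C'"
      using min is_cut_restrict[OF cut cut'] by simp
    moreover have "card A' \<le> card A" "card C' \<le> card C"
      using \<open>A' \<subseteq> A\<close> \<open>C' \<subseteq> C\<close> \<open>finite A\<close> \<open>finite C\<close> by (simp_all add: card_mono)
    ultimately have "card A \<le> card A'" "card C \<le> card C'"
      by linarith+
    then have "A' = A" "C' = C"
      using card_seteq[OF \<open>finite A\<close> \<open>A' \<subseteq> A\<close>] card_seteq[OF \<open>finite C\<close> \<open>C' \<subseteq> C\<close>] by simp_all
    then show ?thesis
      by simp
  qed simp
qed

lemma top_tangles_nonempty: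
  assumes "finite V1" "finite V2" "V1 \<noteq> {} \<or> V2 \<noteq> {}"
    and no_isolated: "\<forall>u\<in>V1. \<exists>w\<in>V2. (u, w) \<in> E"
    and no_full: "\<forall>w\<in>V2. \<exists>u\<in>V1. (u, w) \<notin> E"
  shows "top_tangles V1 V2 E \<noteq> {}"
proof -
  let ?P = "\<lambda>(A, C). is_cut V1 V2 E A C \<and> (A \<noteq> {} \<or> C \<noteq> {})"
  let ?m = "\<lambda>(A, C). card A + card C"
  have "?P (V1, V2)"
    using assms(3) by (simp add: is_cut_def)
  then obtain p where p: "?P p" and min_p: "\<forall>q. ?P q \<longrightarrow> ?m p \<le> ?m q"
    using ex_has_least_nat[of ?P "(V1, V2)" ?m] by blast
  obtain A C where "p = (A, C)"
    by fastforce
  with p min_p have cut: "is_cut V1 V2 E A C" and "A \<noteq> {} \<or> C \<noteq> {}"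
    and min: "\<And>A' C'. ?P (A', C') \<Longrightarrow> card A + card C \<le> card A' + card C'"
    by auto
  then have "finite A" "finite C"
    using assms(1,2) finite_subset unfolding is_cut_def by blast+
  have "A \<noteq> {}"
  proof
    assume "A = {}"
    then obtain w where "w \<in> C" "V1 \<times> {w} \<subseteq> E" "w \<in> V2"
      using cut \<open>A \<noteq> {} \<or> C \<noteq> {}\<close> unfolding is_cut_def by auto
    with no_full show False
      by blast
  qed
  have "C \<noteq> {}"
  proof
    assume "C = {}"
    then obtain u where "u \<in> A" "E \<inter> {u} \<times> V2 = {}" "u \<in> V1"
      using cut \<open>A \<noteq> {}\<close> unfolding is_cut_def by auto
    with no_isolated show False
      by blast
  qed
  have "prime_bigraph A C (E \<inter> A \<times> C)"
    using cut \<open>finite A\<close> \<open>finite C\<close> min by (rule minimal_cut_prime_bigraph) simp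
  then have "tangle A C (E \<inter> A \<times> C)"
    using \<open>finite A\<close> \<open>finite C\<close> \<open>A \<noteq> {}\<close> \<open>C \<noteq> {}\<close>
    by (intro prime_bigraph_imp_tangle) auto
  with cut show ?thesis
    unfolding top_tangles_def by blast
qed

lemma card_top_tangles:
  assumes "finite V1" "finite V2" "V1 \<noteq> {} \<or> V2 \<noteq> {}"
  shows "card (top_tangles V1 V2 E) =
    of_bool ((\<forall>u\<in>V1. \<exists>w\<in>V2. (u, w) \<in> E) \<and> (\<forall>w\<in>V2. \<exists>u\<in>V1. (u, w) \<notin> E))"
proof (cases "(\<forall>u\<in>V1. \<exists>w\<in>V2. (u, w) \<in> E) \<and> (\<forall>w\<in>V2. \<exists>u\<in>V1. (u, w) \<notin> E)")
  case True
  then obtain A C where AC: "(A, C) \<in> top_tangles V1 V2 E"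
    using top_tangles_nonempty[OF assms, of E] by auto
  have "top_tangles V1 V2 E = {(A, C)}"
  proof (intro equalityI subsetI)
    fix p assume "p \<in> top_tangles V1 V2 E"
    moreover obtain A' C' where "p = (A', C')"
      by fastforce
    ultimately show "p \<in> {(A, C)}"
      using top_tangles_unique[OF AC] by simp
  qed (use AC in simp)
  with True show ?thesis
    by simp
next
  case False
  have "top_tangles V1 V2 E = {}"
  proof (rule equals0I)
    fix p assume "p \<in> top_tangles V1 V2 E"
    moreover obtain A C where "p = (A, C)"
      by fastforce
    ultimately have AC: "(A, C) \<in> top_tangles V1 V2 E"
      by simp
    have "\<forall>u\<in>V1. \<exists>w\<in>V2. (u, w) \<in> E" "\<forall>w\<in>V2. \<exists>u\<in>V1. (u, w) \<notin> E"
      using top_tangles_no_isolated[OF AC] top_tangles_no_full[OF AC] by blast+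
    with False show False
      by blast
  qed
  with False show ?thesis
    by simp
qed


section \<open>Counting graphs by their top tangle\<close>

lemma connected_on_image:
  assumes "connected_on S R"
    and "\<And>a b. a \<in> S \<Longrightarrow> b \<in> S \<Longrightarrow> R a b \<Longrightarrow> R' (h a) (h b)"
  shows "connected_on (h ` S) R'"
  unfolding connected_on_def
proof (intro ballI)
  fix x y assume "x \<in> h ` S" "y \<in> h ` S"
  then obtain a b where "a \<in> S" "b \<in> S" "x = h a" "y = h b"
    by blast
  then have "(a, b) \<in> {(x, y). x \<in> S \<and> y \<in> S \<and> R x y}\<^sup>*"
    using assms(1) unfolding connected_on_def by blast
  then have "(h a, h b) \<in> {(x, y). x \<in> h ` S \<and> y \<in> h ` S \<and> R' x y}\<^sup>*"
    by (induction rule: rtrancl_induct) (auto intro: rtrancl_into_rtrancl assms(2))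
  with \<open>x = h a\<close> \<open>y = h b\<close> show "(x, y) \<in> {(x, y). x \<in> h ` S \<and> y \<in> h ` S \<and> R' x y}\<^sup>*"
    by simp
qed

lemma incomparable_image:
  assumes "inj_on f X" "P \<subseteq> X" "Q \<subseteq> X"
  shows "incomparable (f ` P) (f ` Q) \<longleftrightarrow> incomparable P Q"
proof -
  have "f ` P \<subseteq> f ` Q \<longleftrightarrow> P \<subseteq> Q" "f ` Q \<subseteq> f ` P \<longleftrightarrow> Q \<subseteq> P"
    using assms inj_on_image_mem_iff[OF assms(1)] by blast+
  then show ?thesis
    unfolding incomparable_def by simp
qed

lemma map_prod_image_mem_iff:
  assumes "inj_on f X" "inj_on g Y" "K \<subseteq> X \<times> Y" "u \<in> X" "w \<in> Y"
  shows "(f u, g w) \<in> map_prod f g ` K \<longleftrightarrow> (u, w) \<in> K"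
proof
  assume "(f u, g w) \<in> map_prod f g ` K"
  then obtain u' w' where "(u', w') \<in> K" "f u' = f u" "g w' = g w"
    by auto
  moreover have "u' = u" "w' = w"
    using calculation assms inj_onD[OF assms(1)] inj_onD[OF assms(2)] by blast+
  ultimately show "(u, w) \<in> K"
    by simp
qed auto

lemma connected_top_image:
  assumes "inj_on f X" "inj_on g Y" "K \<subseteq> X \<times> Y"
    and "connected_on Y (\<lambda>a b. incomparable (nbr2 X K a) (nbr2 X K b))"
  shows "connected_on (g ` Y)
    (\<lambda>a b. incomparable (nbr2 (f ` X) (map_prod f g ` K) a) (nbr2 (f ` X) (map_prod f g ` K) b))"
proof (rule connected_on_image[OF assms(4)])
  have "nbr2 (f ` X) (map_prod f g ` K) (g w) = f ` nbr2 X K w" if "w \<in> Y" for w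
  proof -
    have "nbr2 (f ` X) (map_prod f g ` K) (g w) = f ` {u \<in> X. (f u, g w) \<in> map_prod f g ` K}"
      unfolding nbr2_def by (rule Compr_image_eq)
    also have "{u \<in> X. (f u, g w) \<in> map_prod f g ` K} = nbr2 X K w"
      unfolding nbr2_def
      by (intro Collect_cong conj_cong refl) (simp add: map_prod_image_mem_iff[OF assms(1-3) _ that])
    finally show ?thesis .
  qed
  moreover have "nbr2 X K w \<subseteq> X" for w
    unfolding nbr2_def by blast
  ultimately show "incomparable (nbr2 (f ` X) (map_prod f g ` K) (g a)) (nbr2 (f ` X) (map_prod f g ` K) (g b))"
    if "a \<in> Y" "b \<in> Y" "incomparable (nbr2 X K a) (nbr2 X K b)" for a b
    using that incomparable_image[OF assms(1)] by simp
qed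

lemma tangle_image:
  assumes "inj_on f X" "inj_on g Y" "tangle X Y K"
  shows "tangle (f ` X) (g ` Y) (map_prod f g ` K)"
proof -
  have K: "K \<subseteq> X \<times> Y" and "K\<inverse> \<subseteq> Y \<times> X"
    using assms(3) by (auto simp: tangle_def)
  have "map_prod g f ` K\<inverse> = (map_prod f g ` K)\<inverse>"
    by auto
  then have "connected_on (f ` X)
    (\<lambda>a b. incomparable (nbr1 (g ` Y) (map_prod f g ` K) a) (nbr1 (g ` Y) (map_prod f g ` K) b))"
    using connected_top_image[OF assms(2,1) \<open>K\<inverse> \<subseteq> Y \<times> X\<close>] assms(3)
    by (simp add: tangle_def nbr2_converse)
  moreover have "connected_on (g ` Y)
    (\<lambda>a b. incomparable (nbr2 (f ` X) (map_prod f g ` K) a) (nbr2 (f ` X) (map_prod f g ` K) b))"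
    using connected_top_image[OF assms(1,2) K] assms(3) by (simp add: tangle_def)
  ultimately show ?thesis
    using assms K by (auto simp: tangle_def card_image)
qed

definition tangles :: "'a set \<Rightarrow> 'b set \<Rightarrow> ('a \<times> 'b) set set" where
  "tangles V1 V2 = {E. E \<subseteq> V1 \<times> V2 \<and> tangle V1 V2 E}"

lemma finite_tangles: "finite V1 \<Longrightarrow> finite V2 \<Longrightarrow> finite (tangles V1 V2)"
  unfolding tangles_def by (simp add: finite_subset[of _ "Pow (V1 \<times> V2)"] subset_eq)

lemma card_tangles_le_image:
  assumes "finite X" "finite Y" "inj_on f X" "inj_on g Y"
  shows "card (tangles X Y) \<le> card (tangles (f ` X) (g ` Y))"
proof (rule card_inj_on_le)
  show "inj_on (image (map_prod f g)) (tangles X Y)"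
    using inj_on_image_Pow[OF map_prod_inj_on[OF assms(3,4)]]
    by (rule inj_on_subset) (auto simp: tangles_def)
  show "image (map_prod f g) ` tangles X Y \<subseteq> tangles (f ` X) (g ` Y)"
    using tangle_image[OF assms(3,4)] by (auto simp: tangles_def)
  show "finite (tangles (f ` X) (g ` Y))"
    using assms by (simp add: finite_tangles)
qed

lemma card_tangles_image:
  assumes "finite X" "finite Y" "inj_on f X" "inj_on g Y"
  shows "card (tangles (f ` X) (g ` Y)) = card (tangles X Y)"
proof (rule antisym)
  have "card (tangles (f ` X) (g ` Y))
      \<le> card (tangles (inv_into X f ` f ` X) (inv_into Y g ` g ` Y))"
    using assms by (intro card_tangles_le_image) (auto intro: inj_on_inv_into)
  then show "card (tangles (f ` X) (g ` Y)) \<le> card (tangles X Y)"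
    using assms by simp
qed (rule card_tangles_le_image[OF assms])

lemma card_tangles_eq_tau:
  assumes "finite X" "finite Y"
  shows "card (tangles X Y) = tau (card X) (card Y)"
proof -
  obtain f g where "bij_betw f X {0..<card X}" "bij_betw g Y {0..<card Y}"
    using ex_bij_betw_finite_nat assms by metis
  then show ?thesis
    using card_tangles_image[OF assms, of f g] unfolding tau_def tangles_def bij_betw_def by simp
qed

lemma card_relations_rowwise:
  assumes "finite X" "finite Y"
  shows "card {E \<in> Pow (X \<times> Y). \<forall>u\<in>X. Q (E `` {u})} = card {B \<in> Pow Y. Q B} ^ card X"
proof -
  have "bij_betw (Sigma X) (PiE X (\<lambda>_. {B \<in> Pow Y. Q B})) {E \<in> Pow (X \<times> Y). \<forall>u\<in>X. Q (E `` {u})}"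
  proof (rule bij_betw_byWitness[where f' = "\<lambda>E. restrict (\<lambda>u. E `` {u}) X"])
    have row: "Sigma X F `` {u} = F u" if "u \<in> X" for F u
      using that by auto
    show "\<forall>F\<in>PiE X (\<lambda>_. {B \<in> Pow Y. Q B}). restrict (\<lambda>u. Sigma X F `` {u}) X = F"
      by (auto simp: PiE_def extensional_def fun_eq_iff row)
    show "\<forall>E\<in>{E \<in> Pow (X \<times> Y). \<forall>u\<in>X. Q (E `` {u})}. Sigma X (restrict (\<lambda>u. E `` {u}) X) = E"
      by auto
    show "Sigma X ` PiE X (\<lambda>_. {B \<in> Pow Y. Q B}) \<subseteq> {E \<in> Pow (X \<times> Y). \<forall>u\<in>X. Q (E `` {u})}"
      by (auto simp: PiE_def Pi_def row)
    show "(\<lambda>E. restrict (\<lambda>u. E `` {u}) X) ` {E \<in> Pow (X \<times> Y). \<forall>u\<in>X. Q (E `` {u})}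
        \<subseteq> PiE X (\<lambda>_. {B \<in> Pow Y. Q B})"
      by auto
  qed
  then show ?thesis
    using assms(1) by (simp add: bij_betw_same_card[symmetric] card_PiE)
qed

lemma card_relations_columnwise:
  assumes "finite X" "finite Y"
  shows "card {E \<in> Pow (X \<times> Y). \<forall>w\<in>Y. Q (E\<inverse> `` {w})} = card {B \<in> Pow X. Q B} ^ card Y"
proof -
  have "bij_betw converse {E \<in> Pow (Y \<times> X). \<forall>w\<in>Y. Q (E `` {w})} {E \<in> Pow (X \<times> Y). \<forall>w\<in>Y. Q (E\<inverse> `` {w})}"
    by (rule bij_betw_byWitness[where f' = converse]) auto
  then show ?thesis
    using card_relations_rowwise[OF assms(2,1)] by (simp add: bij_betw_same_card[symmetric])
qed

lemma sum_Pow_card: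
  fixes f :: "nat \<Rightarrow> 'a::comm_semiring_1"
  assumes "finite S"
  shows "(\<Sum>A\<in>Pow S. f (card A)) = (\<Sum>k\<le>card S. of_nat (card S choose k) * f k)"
proof -
  have "(\<Sum>A\<in>Pow S. f (card A)) = (\<Sum>k\<le>card S. \<Sum>A\<in>{A \<in> Pow S. card A = k}. f (card A))"
    using assms by (intro sum.group[symmetric]) (auto intro: card_mono)
  also have "\<dots> = (\<Sum>k\<le>card S. of_nat (card S choose k) * f k)"
    using n_subsets[OF assms] by (intro sum.cong) simp_all
  finally show ?thesis .
qed

lemma card_graphs_with_top_tangle:
  assumes "finite V1" "finite V2" "A \<subseteq> V1" "C \<subseteq> V2"
  shows "card {E \<in> Pow (V1 \<times> V2). (A, C) \<in> top_tangles V1 V2 E}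
    = 2 ^ (card (V1 - A) * card (V2 - C)) * card (tangles A C)"
proof -
  let ?glue = "\<lambda>(H, K). H \<union> K \<union> (V1 - A) \<times> C"
  have "bij_betw ?glue (Pow ((V1 - A) \<times> (V2 - C)) \<times> tangles A C)
      {E \<in> Pow (V1 \<times> V2). (A, C) \<in> top_tangles V1 V2 E}"
  proof (rule bij_betw_byWitness[where f' = "\<lambda>E. (E \<inter> (V1 - A) \<times> (V2 - C), E \<inter> A \<times> C)"])
    show "\<forall>p\<in>Pow ((V1 - A) \<times> (V2 - C)) \<times> tangles A C.
        (?glue p \<inter> (V1 - A) \<times> (V2 - C), ?glue p \<inter> A \<times> C) = p"
      by (auto simp: tangles_def)
    show "\<forall>E\<in>{E \<in> Pow (V1 \<times> V2). (A, C) \<in> top_tangles V1 V2 E}.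
        ?glue (E \<inter> (V1 - A) \<times> (V2 - C), E \<inter> A \<times> C) = E"
      by (auto simp: top_tangles_def is_cut_def)
    show "?glue ` (Pow ((V1 - A) \<times> (V2 - C)) \<times> tangles A C)
        \<subseteq> {E \<in> Pow (V1 \<times> V2). (A, C) \<in> top_tangles V1 V2 E}"
    proof
      fix E assume "E \<in> ?glue ` (Pow ((V1 - A) \<times> (V2 - C)) \<times> tangles A C)"
      then obtain H K where HK: "H \<subseteq> (V1 - A) \<times> (V2 - C)" "K \<in> tangles A C"
        and E: "E = H \<union> K \<union> (V1 - A) \<times> C"
        by auto
      then have "E \<inter> A \<times> C = K"
        by (auto simp: tangles_def)
      with HK E assms show "E \<in> {E \<in> Pow (V1 \<times> V2). (A, C) \<in> top_tangles V1 V2 E}"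
        by (auto simp: tangles_def top_tangles_def is_cut_def)
    qed
    show "(\<lambda>E. (E \<inter> (V1 - A) \<times> (V2 - C), E \<inter> A \<times> C)) ` {E \<in> Pow (V1 \<times> V2). (A, C) \<in> top_tangles V1 V2 E}
        \<subseteq> Pow ((V1 - A) \<times> (V2 - C)) \<times> tangles A C"
      by (auto simp: tangles_def top_tangles_def)
  qed
  then show ?thesis
    using assms by (simp add: bij_betw_same_card[symmetric] card_cartesian_product card_Pow)
qed

lemma sum_card_top_tangles_by_cut:
  assumes "finite V1" "finite V2"
  shows "(\<Sum>E\<in>Pow (V1 \<times> V2). card (top_tangles V1 V2 E))
    = (\<Sum>A\<in>Pow V1. \<Sum>C\<in>Pow V2. 2 ^ (card (V1 - A) * card (V2 - C)) * card (tangles A C))"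
proof -
  have "top_tangles V1 V2 E = {p \<in> Pow V1 \<times> Pow V2. p \<in> top_tangles V1 V2 E}" for E
    by (auto simp: top_tangles_def is_cut_def)
  then have "(\<Sum>E\<in>Pow (V1 \<times> V2). card (top_tangles V1 V2 E))
      = (\<Sum>E\<in>Pow (V1 \<times> V2). card {p \<in> Pow V1 \<times> Pow V2. p \<in> top_tangles V1 V2 E})"
    by simp
  also have "\<dots> = (\<Sum>p\<in>Pow V1 \<times> Pow V2. card {E \<in> Pow (V1 \<times> V2). p \<in> top_tangles V1 V2 E})"
    using assms sum.swap_restrict[of "Pow (V1 \<times> V2)" "Pow V1 \<times> Pow V2" "\<lambda>_ _. 1::nat"] by simp
  also have "\<dots> = (\<Sum>A\<in>Pow V1. \<Sum>C\<in>Pow V2. card {E \<in> Pow (V1 \<times> V2). (A, C) \<in> top_tangles V1 V2 E})"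
    by (simp add: sum.cartesian_product)
  also have "\<dots> = (\<Sum>A\<in>Pow V1. \<Sum>C\<in>Pow V2. 2 ^ (card (V1 - A) * card (V2 - C)) * card (tangles A C))"
    using assms card_graphs_with_top_tangle by (intro sum.cong) auto
  finally show ?thesis .
qed

lemma sum_card_top_tangles_formula:
  assumes "finite V1" "finite V2" "V1 \<noteq> {} \<or> V2 \<noteq> {}"
  shows "(\<Sum>E\<in>Pow (V1 \<times> V2). card (top_tangles V1 V2 E)) + 2 ^ (card V1 * card V2)
    = (2 ^ card V2 - 1) ^ card V1 + (2 ^ card V1 - 1) ^ card V2"
proof -
  let ?G = "Pow (V1 \<times> V2)"
  let ?P1 = "{E \<in> ?G. \<forall>u\<in>V1. E `` {u} \<noteq> {}}"
  let ?P2 = "{E \<in> ?G. \<forall>w\<in>V2. E\<inverse> `` {w} \<noteq> V1}"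
  have "card (top_tangles V1 V2 E) = of_bool (E \<in> ?P1 \<inter> ?P2)" if "E \<in> ?G" for E
  proof -
    have "E \<in> ?P1 \<longleftrightarrow> (\<forall>u\<in>V1. \<exists>w\<in>V2. (u, w) \<in> E)"
      "E \<in> ?P2 \<longleftrightarrow> (\<forall>w\<in>V2. \<exists>u\<in>V1. (u, w) \<notin> E)"
      using that by blast+
    then show ?thesis
      using card_top_tangles[OF assms, of E] by simp
  qed
  then have "(\<Sum>E\<in>?G. card (top_tangles V1 V2 E)) = (\<Sum>E\<in>?G. of_bool (E \<in> ?P1 \<inter> ?P2))"
    by (rule sum.cong[OF refl])
  also have "\<dots> = card (?G \<inter> {E. E \<in> ?P1 \<inter> ?P2})"
    by (intro sum_of_bool_eq[where 'a = nat, simplified]) (use assms in simp_all)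
  also have "?G \<inter> {E. E \<in> ?P1 \<inter> ?P2} = ?P1 \<inter> ?P2"
    by blast
  finally have "(\<Sum>E\<in>?G. card (top_tangles V1 V2 E)) = card (?P1 \<inter> ?P2)" .
  moreover have "?P1 \<union> ?P2 = ?G"
    by auto
  moreover have "card ?P1 = (2 ^ card V2 - 1) ^ card V1"
  proof -
    have "{B \<in> Pow V2. B \<noteq> {}} = Pow V2 - {{}}"
      by blast
    then show ?thesis
      using card_relations_rowwise[OF assms(1,2), of "\<lambda>B. B \<noteq> {}"] assms by (simp add: card_Pow)
  qed
  moreover have "card ?P2 = (2 ^ card V1 - 1) ^ card V2"
  proof -
    have "{B \<in> Pow V1. B \<noteq> V1} = Pow V1 - {V1}"
      by blast
    then show ?thesis
      using card_relations_columnwise[OF assms(1,2), of "\<lambda>B. B \<noteq> V1"] assms by (simp add: card_Pow)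
  qed
  moreover have "card ?G = 2 ^ (card V1 * card V2)"
    using assms by (simp add: card_Pow card_cartesian_product)
  ultimately show ?thesis
    using card_Un_Int[of ?P1 ?P2] assms by simp
qed

lemma tau_convolution:
  assumes "n \<noteq> 0 \<or> m \<noteq> 0"
  shows "(\<Sum>a\<le>n. \<Sum>b\<le>m. (n choose a) * (m choose b) * tau a b * 2 ^ ((n - a) * (m - b)))
      + 2 ^ (n * m) = (2 ^ m - 1) ^ n + (2 ^ n - 1) ^ m"
proof -
  let ?V1 = "{0..<n}" and ?V2 = "{0..<m}"
  let ?f = "\<lambda>a b. 2 ^ ((n - a) * (m - b)) * tau a b"
  have "(\<Sum>a\<le>n. \<Sum>b\<le>m. (n choose a) * (m choose b) * tau a b * 2 ^ ((n - a) * (m - b)))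
      = (\<Sum>a\<le>n. (n choose a) * (\<Sum>b\<le>m. (m choose b) * ?f a b))"
    by (simp add: sum_distrib_left mult_ac)
  also have "\<dots> = (\<Sum>A\<in>Pow ?V1. \<Sum>b\<le>m. (m choose b) * ?f (card A) b)"
    using sum_Pow_card[of ?V1 "\<lambda>a. \<Sum>b\<le>m. (m choose b) * ?f a b"] by simp
  also have "\<dots> = (\<Sum>A\<in>Pow ?V1. \<Sum>C\<in>Pow ?V2. ?f (card A) (card C))"
  proof (rule sum.cong[OF refl])
    fix A
    show "(\<Sum>b\<le>m. (m choose b) * ?f (card A) b) = (\<Sum>C\<in>Pow ?V2. ?f (card A) (card C))"
      using sum_Pow_card[of ?V2 "?f (card A)"] by simp
  qed
  also have "\<dots> = (\<Sum>A\<in>Pow ?V1. \<Sum>C\<in>Pow ?V2. 2 ^ (card (?V1 - A) * card (?V2 - C)) * card (tangles A C))"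
    by (intro sum.cong refl)
      (auto simp: card_Diff_subset card_tangles_eq_tau finite_subset[of _ ?V1] finite_subset[of _ ?V2])
  also have "\<dots> = (\<Sum>E\<in>Pow (?V1 \<times> ?V2). card (top_tangles ?V1 ?V2 E))"
    by (simp add: sum_card_top_tangles_by_cut)
  finally show ?thesis
    using sum_card_top_tangles_formula[of ?V1 ?V2] assms by simp
qed


section \<open>Exponential generating functions\<close>

definition biv_egf :: "(nat \<Rightarrow> nat \<Rightarrow> 'a::field_char_0) \<Rightarrow> 'a fps fps" where
  "biv_egf f = Abs_fps (\<lambda>i. Abs_fps (\<lambda>j. f i j / (fact i * fact j)))"

lemma biv_egf_nth [simp]: "biv_egf f $ i $ j = f i j / (fact i * fact j)"
  by (simp add: biv_egf_def)

lemma biv_egf_eqI: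
  assumes "\<And>i j. F $ i $ j = f i j / (fact i * fact j)"
  shows "F = biv_egf f"
  using assms by (intro fps_ext) simp

lemma biv_egf_mult_nth:
  "(biv_egf f * biv_egf g) $ n $ m =
    (\<Sum>a\<le>n. \<Sum>b\<le>m. of_nat (n choose a) * of_nat (m choose b) * f a b * g (n - a) (m - b))
      / (fact n * fact m)"
proof -
  have "(biv_egf f * biv_egf g) $ n $ m
      = (\<Sum>a\<le>n. \<Sum>b\<le>m. f a b / (fact a * fact b) * (g (n - a) (m - b) / (fact (n - a) * fact (m - b))))"
    by (simp add: fps_mult_nth fps_sum_nth atLeast0AtMost)
  also have "\<dots> = (\<Sum>a\<le>n. \<Sum>b\<le>m. of_nat (n choose a) * of_nat (m choose b) * f a b * g (n - a) (m - b)
      / (fact n * fact m))"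
    by (intro sum.cong refl) (simp add: binomial_fact field_simps)
  finally show ?thesis
    by (simp add: sum_divide_distrib)
qed

lemma B_lbl_eq: "B_lbl = biv_egf (\<lambda>i j. 2 ^ (i * j))"
  by (simp add: B_lbl_def biv_egf_def)

lemma B_lbl_nth: "B_lbl $ i $ j = 2 ^ (i * j) / (fact i * fact j)"
  by (simp add: B_lbl_def)

lemma T_lbl_eq: "T_lbl = biv_egf (\<lambda>i j. real (tau i j))"
  by (simp add: T_lbl_def biv_egf_def)

lemma exp_neg_x_eq: "exp_neg_x = biv_egf (\<lambda>i j. if j = 0 then (-1) ^ i else 0)"
  by (rule biv_egf_eqI) (simp add: exp_neg_x_def)

lemma exp_neg_y_eq: "exp_neg_y = biv_egf (\<lambda>i j. if i = 0 then (-1) ^ j else 0)"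
  by (rule biv_egf_eqI) (simp add: exp_neg_y_def)

lemma exp_neg_x_mult_B_lbl_nth: "(exp_neg_x * B_lbl) $ n $ m = (2 ^ m - 1) ^ n / (fact n * fact m)"
proof -
  have "(exp_neg_x * B_lbl) $ n $ m
      = (\<Sum>a\<le>n. of_nat (n choose a) * (-1) ^ a * 2 ^ ((n - a) * m)) / (fact n * fact m)"
    unfolding exp_neg_x_eq B_lbl_eq biv_egf_mult_nth
    by (simp add: if_distrib[of "times _"] if_distrib[of "\<lambda>x. x * _"] cong: if_cong)
  also have "\<dots> = (2 ^ m - 1) ^ n / (fact n * fact m)"
    using binomial_ring[of "-1" "2 ^ m :: real" n] by (simp add: power_mult[symmetric] mult.commute)
  finally show ?thesis .
qed

lemma exp_neg_y_mult_B_lbl_nth: "(exp_neg_y * B_lbl) $ n $ m = (2 ^ n - 1) ^ m / (fact n * fact m)"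
proof -
  have "(exp_neg_y * B_lbl) $ n $ m
      = (\<Sum>b\<le>m. of_nat (m choose b) * (-1) ^ b * 2 ^ (n * (m - b))) / (fact n * fact m)"
    unfolding exp_neg_y_eq B_lbl_eq biv_egf_mult_nth
    by (subst sum.swap) (simp add: if_distrib[of "times _"] if_distrib[of "\<lambda>x. x * _"] cong: if_cong)
  also have "\<dots> = (2 ^ n - 1) ^ m / (fact n * fact m)"
    using binomial_ring[of "-1" "2 ^ n :: real" m] by (simp add: power_mult[symmetric] mult.commute)
  finally show ?thesis .
qed

lemma T_lbl_mult_B_lbl_nth:
  "(T_lbl * B_lbl) $ n $ m =
    real (\<Sum>a\<le>n. \<Sum>b\<le>m. (n choose a) * (m choose b) * tau a b * 2 ^ ((n - a) * (m - b)))
      / (fact n * fact m)"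
  unfolding T_lbl_eq B_lbl_eq biv_egf_mult_nth by simp

lemma tangle_series_mult_B_lbl: "(exp_neg_x + exp_neg_y - 1 - T_lbl) * B_lbl = 1"
proof (intro fps_ext)
  fix n m
  have "((exp_neg_x + exp_neg_y - 1 - T_lbl) * B_lbl) $ n $ m
      = ((exp_neg_x * B_lbl) $ n $ m + (exp_neg_y * B_lbl) $ n $ m - B_lbl $ n $ m - (T_lbl * B_lbl) $ n $ m)"
    by (simp add: algebra_simps)
  also have "\<dots> = (real ((2 ^ m - 1) ^ n + (2 ^ n - 1) ^ m) - 2 ^ (n * m)
      - real (\<Sum>a\<le>n. \<Sum>b\<le>m. (n choose a) * (m choose b) * tau a b * 2 ^ ((n - a) * (m - b))))
      / (fact n * fact m)"
    by (simp add: B_lbl_nth exp_neg_x_mult_B_lbl_nth exp_neg_y_mult_B_lbl_nth T_lbl_mult_B_lbl_nth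
        of_nat_diff diff_divide_distrib add_divide_distrib)
  also have "\<dots> = (1 :: real fps fps) $ n $ m"
  proof (cases "n = 0 \<and> m = 0")
    case True
    have "tau 0 0 = 0"
      by (simp add: tau_def tangle_def)
    with True show ?thesis
      by simp
  next
    case False
    let ?S = "\<Sum>a\<le>n. \<Sum>b\<le>m. (n choose a) * (m choose b) * tau a b * 2 ^ ((n - a) * (m - b))"
    have "real ?S + 2 ^ (n * m) = real ((2 ^ m - 1) ^ n + (2 ^ n - 1) ^ m)"
      using arg_cong[OF tau_convolution[of n m], of real] False by simp
    moreover have "(1 :: real fps fps) $ n $ m = 0"
      using False by (cases n) auto
    ultimately show ?thesis
      by simp
  qed
  finally show "((exp_neg_x + exp_neg_y - 1 - T_lbl) * B_lbl) $ n $ m = (1 :: real fps fps) $ n $ m" .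
qed

lemma B_lbl_mult_inverse: "B_lbl * inverse B_lbl = 1"
proof -
  \<comment> \<open>real fps is no division ring, so we go through the right inverse of the unit B_lbl $ 0\<close>
  have "B_lbl $ 0 = fps_exp 1"
    by (simp add: B_lbl_def fps_eq_iff)
  then have "B_lbl $ 0 * inverse (B_lbl $ 0) = 1"
    by (simp add: inverse_mult_eq_1')
  then show ?thesis
    using fps_right_inverse[of B_lbl "inverse (B_lbl $ 0)"] by (simp add: fps_inverse_def)
qed

theorem theorem4p3:
  shows "T_lbl = exp_neg_x + exp_neg_y - 1 - inverse B_lbl"
proof -
  have "inverse B_lbl = (exp_neg_x + exp_neg_y - 1 - T_lbl) * B_lbl * inverse B_lbl"
    by (simp add: tangle_series_mult_B_lbl)
  also have "\<dots> = exp_neg_x + exp_neg_y - 1 - T_lbl"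
    by (simp add: mult.assoc B_lbl_mult_inverse)
  finally show ?thesis
    by (simp add: algebra_simps)
qed

end
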